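(* Let $\mathbf{CTC}$ be the Core Tuplix Calculus over a nonempty attribute set $A$ and a non-trivial cancellation meadow $\mathcal{D}$ (defined in the context). Every $\mathbf{CTC}$ tuplix term $t$ is derivably equal in $\mathbf{CTC}$ to a canonical term, i.e. to a term of the form \[ \gamma(p_0)\oplus a_1(p_1)\oplus\cdots\oplus a_k(p_k)\oplus x_1\oplus\cdots\oplus x_l \] for some $k,l\ge 0$, data terms $p_0,\dots,p_k$, pairwise distinct attributes $a_1,\dots,a_k\in A$, and tuplix variables $x_1,\dots,x_l$.
   Context: Data: a meadow is a commutative ring with unit with a total unary operation $(\cdot)^{-1}$ satisfying $(u^{-1})^{-1}=u$ and $u\cdot(u\cdot u^{-1})=u$; a non-trivial cancellation meadow additionally satisfies $0\neq 1$ and the cancellation law ($u\neq 0$ and $uv=uw$ imply $v=w$). Fix such a structure $\mathcal{D}$. Data terms are built from data variables ($u,v,w,\dots$), constants $0,1$, binary $+,\cdot$ and unary $-$, $(\cdot)^{-1}$; write $p/q$ for $p\cdot q^{-1}$ and $p-q$ for $p+(-q)$. Fix a nonempty set $A$ of attributes. Tuplix terms are built from tuplix variables $x,y,z,\dots$, constants $\epsilon$ (empty tuplix) and $\delta$ (null tuplix), entries $a(p)$ ($a\in A$, $p$ a data term), zero tests $\gamma(p)$ ($p$ a data term), and the binary operator $\oplus$ (conjunctive composition). $\mathbf{CTC}$ is the two-sorted equational proof system with axioms (T1) $x\oplus y=y\oplus x$; (T2) $(x\oplus y)\oplus z=x\oplus(y\oplus z)$; (T3) $x\oplus\epsilon=x$;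 (T4) $x\oplus\delta=\delta$; (T5) $a(u)\oplus a(v)=a(u+v)$; (T6) $\gamma(u)=\gamma(u/u)$; (T7) $\gamma(0)=\epsilon$; (T8) $\gamma(1)=\delta$; (T9) $\gamma(u)\oplus\gamma(v)=\gamma(u/u+v/v)$; (T10) $\gamma(u-v)\oplus a(u)=\gamma(u-v)\oplus a(v)$ (for all $a\in A$), together with the rule (DE): for all data terms $p,q$, if $\mathcal{D}\models p=q$ then $\gamma(p)=\gamma(q)$ is derivable. *)

theory Defs
  imports Main
begin

record 'd dstruct =
  d_zero :: 'd
  d_one  :: 'd
  d_add  :: "'d \<Rightarrow> 'd \<Rightarrow> 'd"
  d_mul  :: "'d \<Rightarrow> 'd \<Rightarrow> 'd"
  d_neg  :: "'d \<Rightarrow> 'd"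
  d_inv  :: "'d \<Rightarrow> 'd"

definition meadow :: "'d dstruct \<Rightarrow> bool" where
  "meadow D \<longleftrightarrow>
     (\<forall>u v w. d_add D (d_add D u v) w = d_add D u (d_add D v w)) \<and>
     (\<forall>u v. d_add D u v = d_add D v u) \<and>
     (\<forall>u. d_add D u (d_zero D) = u) \<and>
     (\<forall>u. d_add D u (d_neg D u) = d_zero D) \<and>
     (\<forall>u v w. d_mul D (d_mul D u v) w = d_mul D u (d_mul D v w)) \<and>
     (\<forall>u v. d_mul D u v = d_mul D v u) \<and>
     (\<forall>u. d_mul D u (d_one D) = u) \<and>
     (\<forall>u v w. d_mul D u (d_add D v w) = d_add D (d_mul D u v) (d_mul D u w)) \<and>
     (\<forall>u. d_inv D (d_inv D u) = u) \<and>
     (\<forall>u. d_mul D u (d_mul D u (d_inv D u)) = u)"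

definition nontrivial_cancellation_meadow :: "'d dstruct \<Rightarrow> bool" where
  "nontrivial_cancellation_meadow D \<longleftrightarrow>
     meadow D \<and> d_zero D \<noteq> d_one D \<and>
     (\<forall>u v w. u \<noteq> d_zero D \<longrightarrow> d_mul D u v = d_mul D u w \<longrightarrow> v = w)"

datatype 'v dterm =
    DVar 'v
  | DZero
  | DOne
  | DPlus "'v dterm" "'v dterm"
  | DTimes "'v dterm" "'v dterm"
  | DNeg "'v dterm"
  | DInv "'v dterm"

fun deval :: "'d dstruct \<Rightarrow> ('v \<Rightarrow> 'd) \<Rightarrow> 'v dterm \<Rightarrow> 'd" where
  "deval D \<sigma> (DVar u) = \<sigma> u"
| "deval D \<sigma> DZero = d_zero D"
| "deval D \<sigma> DOne = d_one D"
| "deval D \<sigma> (DPlus p q) = d_add D (deval D \<sigma> p) (deval D \<sigma> q)"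
| "deval D \<sigma> (DTimes p q) = d_mul D (deval D \<sigma> p) (deval D \<sigma> q)"
| "deval D \<sigma> (DNeg p) = d_neg D (deval D \<sigma> p)"
| "deval D \<sigma> (DInv p) = d_inv D (deval D \<sigma> p)"

definition dvalid :: "'d dstruct \<Rightarrow> 'v dterm \<Rightarrow> 'v dterm \<Rightarrow> bool" where
  "dvalid D p q \<longleftrightarrow> (\<forall>\<sigma>. deval D \<sigma> p = deval D \<sigma> q)"

definition DDiv :: "'v dterm \<Rightarrow> 'v dterm \<Rightarrow> 'v dterm" where
  "DDiv p q = DTimes p (DInv q)"

definition DMinus :: "'v dterm \<Rightarrow> 'v dterm \<Rightarrow> 'v dterm" where
  "DMinus p q = DPlus p (DNeg q)"

datatype ('a, 'v, 'x) tterm =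
    TVar 'x
  | Eps
  | Delta
  | Entry 'a "'v dterm"
  | Gamma "'v dterm"
  | Oplus "('a, 'v, 'x) tterm" "('a, 'v, 'x) tterm"

inductive ctc_eq :: "'d dstruct \<Rightarrow> ('a, 'v, 'x) tterm \<Rightarrow> ('a, 'v, 'x) tterm \<Rightarrow> bool"
  for D :: "'d dstruct" where
  refl:  "ctc_eq D t t"
| sym:   "ctc_eq D s t \<Longrightarrow> ctc_eq D t s"
| trans: "ctc_eq D s t \<Longrightarrow> ctc_eq D t r \<Longrightarrow> ctc_eq D s r"
| cong_oplus: "ctc_eq D s s' \<Longrightarrow> ctc_eq D t t' \<Longrightarrow> ctc_eq D (Oplus s t) (Oplus s' t')"
| T1:  "ctc_eq D (Oplus x y) (Oplus y x)"
| T2:  "ctc_eq D (Oplus (Oplus x y) z) (Oplus x (Oplus y z))"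
| T3:  "ctc_eq D (Oplus x Eps) x"
| T4:  "ctc_eq D (Oplus x Delta) Delta"
| T5:  "ctc_eq D (Oplus (Entry a p) (Entry a q)) (Entry a (DPlus p q))"
| T6:  "ctc_eq D (Gamma p) (Gamma (DDiv p p))"
| T7:  "ctc_eq D (Gamma DZero) Eps"
| T8:  "ctc_eq D (Gamma DOne) Delta"
| T9:  "ctc_eq D (Oplus (Gamma p) (Gamma q)) (Gamma (DPlus (DDiv p p) (DDiv q q)))"
| T10: "ctc_eq D (Oplus (Gamma (DMinus p q)) (Entry a p)) (Oplus (Gamma (DMinus p q)) (Entry a q))"
| DE:  "dvalid D p q \<Longrightarrow> ctc_eq D (Gamma p) (Gamma q)"

definition canon :: "'v dterm \<Rightarrow> ('a \<times> 'v dterm) list \<Rightarrow> 'x list \<Rightarrow> ('a, 'v, 'x) tterm" where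
  "canon p0 es xs =
     foldl Oplus (Gamma p0) (map (\<lambda>(a, p). Entry a p) es @ map TVar xs)"

end

theory Submission
  imports Defs "HOL-Library.Multiset"
begin

text \<open>A term is normalised by absorbing its leaves, from left to right, into a canonical
  term: a zero test merges into the leading zero test by T9, an entry either is appended or
  is merged by T5 into the entry with the same attribute, a variable is appended, \<open>\<epsilon>\<close> vanishes
  by T3 and \<open>\<delta>\<close> swallows everything by T4 and is itself \<open>\<gamma>(1)\<close> by T8.  Commutativity and
  associativity allow the summands of a canonical term to be rearranged freely.  Since the
  data terms are only ever combined syntactically, no property of the meadow is used.\<close>

declare ctc_eq.trans[trans]

lemma ctc_foldl_Oplus_cong:
  "ctc_eq D g g' \<Longrightarrow> ctc_eq D (foldl Oplus g L) (foldl Oplus g' L)"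
  by (induction L arbitrary: g g') (auto intro: ctc_eq.cong_oplus ctc_eq.refl)

lemma ctc_foldl_Oplus_base:
  "ctc_eq D (foldl Oplus (Oplus g x) L) (Oplus (foldl Oplus g L) x)"
proof (induction L rule: rev_induct)
  case Nil
  show ?case by (simp add: ctc_eq.refl)
next
  case (snoc y L)
  have "ctc_eq D (foldl Oplus (Oplus g x) (L @ [y])) (Oplus (Oplus (foldl Oplus g L) x) y)"
    using snoc by (simp add: ctc_eq.cong_oplus ctc_eq.refl)
  also have "ctc_eq D \<dots> (Oplus (foldl Oplus g L) (Oplus x y))"
    by (rule ctc_eq.T2)
  also have "ctc_eq D \<dots> (Oplus (foldl Oplus g L) (Oplus y x))"
    by (intro ctc_eq.cong_oplus ctc_eq.refl ctc_eq.T1)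
  also have "ctc_eq D \<dots> (Oplus (Oplus (foldl Oplus g L) y) x)"
    by (rule ctc_eq.sym, rule ctc_eq.T2)
  finally show ?case by simp
qed

lemma ctc_foldl_Oplus_perm:
  "mset L = mset L' \<Longrightarrow> ctc_eq D (foldl Oplus g L) (foldl Oplus g L')"
proof (induction L arbitrary: g L')
  case Nil
  then show ?case by (simp add: ctc_eq.refl)
next
  case (Cons x L)
  then have "x \<in> set L'" by (metis list.set_intros(1) set_mset_mset)
  then obtain A B where L': "L' = A @ x # B" by (metis split_list)
  with Cons.prems have "mset L = mset (A @ B)" by simp
  then have "ctc_eq D (foldl Oplus g (x # L)) (foldl Oplus (foldl Oplus g (x # A)) B)"
    using Cons.IH[of "A @ B" "Oplus g x"] by simp
  also have "ctc_eq D \<dots> (foldl Oplus (foldl Oplus g (A @ [x])) B)"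
    using ctc_foldl_Oplus_base[of D g x A]
    by (intro ctc_foldl_Oplus_cong) (simp add: ctc_eq.sym)
  finally show ?case using L' by simp
qed

lemma ctc_foldl_Oplus_snoc2:
  assumes "ctc_eq D (Oplus s t) u"
  shows "ctc_eq D (foldl Oplus g (L @ [s, t])) (foldl Oplus g (L @ [u]))"
proof -
  have "ctc_eq D (Oplus (Oplus (foldl Oplus g L) s) t) (Oplus (foldl Oplus g L) (Oplus s t))"
    by (rule ctc_eq.T2)
  also have "ctc_eq D \<dots> (Oplus (foldl Oplus g L) u)"
    using assms by (intro ctc_eq.cong_oplus ctc_eq.refl)
  finally show ?thesis by simp
qed

definition entries :: "('a \<times> 'v dterm) list \<Rightarrow> ('a, 'v, 'x) tterm list" where
  "entries es = map (\<lambda>(a, p). Entry a p) es"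

lemma entries_simps [simp]:
  "entries [] = []"
  "entries ((a, p) # es) = Entry a p # entries es"
  "entries (es @ es') = entries es @ entries es'"
  by (simp_all add: entries_def)

lemma canon_eq_foldl: "canon p0 es xs = foldl Oplus (Gamma p0) (entries es @ map TVar xs)"
  by (simp add: canon_def entries_def)

fun add_entry :: "'a \<Rightarrow> 'v dterm \<Rightarrow> ('a \<times> 'v dterm) list \<Rightarrow> ('a \<times> 'v dterm) list" where
  "add_entry a q [] = [(a, q)]"
| "add_entry a q ((b, p) # es) =
     (if a = b then (a, DPlus p q) # es else (b, p) # add_entry a q es)"

lemma add_entry_notin: "a \<notin> fst ` set es \<Longrightarrow> add_entry a q es = es @ [(a, q)]"
  by (induction es) auto

lemma add_entry_in:
  "a \<in> fst ` set es \<Longrightarrow>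
     \<exists>A p B. es = A @ (a, p) # B \<and> add_entry a q es = A @ (a, DPlus p q) # B"
proof (induction es)
  case (Cons e es)
  obtain b p where e: "e = (b, p)" by fastforce
  show ?case
  proof (cases "a = b")
    case True
    with e show ?thesis by (intro exI[of _ "[]"]) auto
  next
    case False
    with Cons.prems e obtain A p' B
      where "es = A @ (a, p') # B \<and> add_entry a q es = A @ (a, DPlus p' q) # B"
      using Cons.IH by auto
    with e False show ?thesis by (intro exI[of _ "(b, p) # A"]) auto
  qed
qed simp

lemma fst_set_add_entry: "fst ` set (add_entry a q es) = insert a (fst ` set es)"
proof (induction es)
  case (Cons e es)
  then show ?case by (cases e) auto
qed simp

lemma distinct_add_entry:
  "distinct (map fst es) \<Longrightarrow> distinct (map fst (add_entry a q es))"
proof (induction es)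
  case (Cons e es)
  then show ?case
    using fst_set_add_entry[of a q es] by (cases e) (auto simp: image_iff)
qed simp

lemma ctc_canon_Oplus_Entry:
  fixes es :: "('a \<times> 'v dterm) list" and xs :: "'x list"
  shows "ctc_eq D (Oplus (canon p0 es xs) (Entry a q)) (canon p0 (add_entry a q es) xs)"
proof (cases "a \<in> fst ` set es")
  case False
  have "Oplus (canon p0 es xs) (Entry a q)
      = foldl Oplus (Gamma p0) (entries es @ map TVar xs @ [Entry a q])"
    by (simp add: canon_eq_foldl)
  also have "ctc_eq D \<dots> (canon p0 (add_entry a q es) xs)"
    unfolding canon_eq_foldl add_entry_notin[OF False] by (rule ctc_foldl_Oplus_perm) simp
  finally show ?thesis .
next
  case True
  then obtain A p B where es: "es = A @ (a, p) # B"
    and added: "add_entry a q es = A @ (a, DPlus p q) # B"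
    using add_entry_in[OF True, of q] by blast
  define M :: "('a, 'v, 'x) tterm list" where "M = entries A @ entries B @ map TVar xs"
  have "Oplus (canon p0 es xs) (Entry a q)
      = foldl Oplus (Gamma p0) (entries A @ Entry a p # entries B @ map TVar xs @ [Entry a q])"
    by (simp add: canon_eq_foldl es)
  also have "ctc_eq D \<dots> (foldl Oplus (Gamma p0) (M @ [Entry a p, Entry a q]))"
    unfolding M_def by (rule ctc_foldl_Oplus_perm) simp
  also have "ctc_eq D \<dots> (foldl Oplus (Gamma p0) (M @ [Entry a (DPlus p q)]))"
    by (rule ctc_foldl_Oplus_snoc2, rule ctc_eq.T5)
  also have "ctc_eq D \<dots> (canon p0 (add_entry a q es) xs)"
    unfolding canon_eq_foldl added M_def by (rule ctc_foldl_Oplus_perm) simp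
  finally show ?thesis .
qed

lemma ctc_canon_Oplus_Gamma:
  "ctc_eq D (Oplus (canon p0 es xs) (Gamma q)) (canon (DPlus (DDiv p0 p0) (DDiv q q)) es xs)"
proof -
  have "ctc_eq D (Oplus (canon p0 es xs) (Gamma q))
      (foldl Oplus (Oplus (Gamma p0) (Gamma q)) (entries es @ map TVar xs))"
    unfolding canon_eq_foldl by (rule ctc_eq.sym, rule ctc_foldl_Oplus_base)
  also have "ctc_eq D \<dots> (canon (DPlus (DDiv p0 p0) (DDiv q q)) es xs)"
    unfolding canon_eq_foldl by (rule ctc_foldl_Oplus_cong, rule ctc_eq.T9)
  finally show ?thesis .
qed

lemma ctc_canon_Oplus_Delta: "ctc_eq D (Oplus (canon p0 es xs) Delta) (canon DOne [] [])"
proof -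
  have "ctc_eq D (Oplus (canon p0 es xs) Delta) Delta" by (rule ctc_eq.T4)
  also have "ctc_eq D Delta (Gamma DOne)" by (rule ctc_eq.sym, rule ctc_eq.T8)
  finally show ?thesis by (simp add: canon_def)
qed

type_synonym ('a, 'v, 'x) canon_data = "'v dterm \<times> ('a \<times> 'v dterm) list \<times> 'x list"

definition canon_of :: "('a, 'v, 'x) canon_data \<Rightarrow> ('a, 'v, 'x) tterm" where
  "canon_of S = (case S of (p0, es, xs) \<Rightarrow> canon p0 es xs)"

fun absorb :: "('a, 'v, 'x) canon_data \<Rightarrow> ('a, 'v, 'x) tterm \<Rightarrow> ('a, 'v, 'x) canon_data" where
  "absorb S (Oplus s u) = absorb (absorb S s) u"
| "absorb (p0, es, xs) (TVar x) = (p0, es, xs @ [x])"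
| "absorb (p0, es, xs) Eps = (p0, es, xs)"
| "absorb (p0, es, xs) Delta = (DOne, [], [])"
| "absorb (p0, es, xs) (Entry a q) = (p0, add_entry a q es, xs)"
| "absorb (p0, es, xs) (Gamma q) = (DPlus (DDiv p0 p0) (DDiv q q), es, xs)"

lemma distinct_absorb:
  "distinct (map fst (fst (snd S))) \<Longrightarrow> distinct (map fst (fst (snd (absorb S t))))"
  by (induction S t rule: absorb.induct) (auto simp: distinct_add_entry)

lemma ctc_canon_of_Oplus_absorb: "ctc_eq D (Oplus (canon_of S) t) (canon_of (absorb S t))"
proof (induction S t rule: absorb.induct)
  case (1 S s u)
  have "ctc_eq D (Oplus (canon_of S) (Oplus s u)) (Oplus (Oplus (canon_of S) s) u)"
    by (rule ctc_eq.sym, rule ctc_eq.T2)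
  also have "ctc_eq D \<dots> (Oplus (canon_of (absorb S s)) u)"
    using "1.IH"(1) by (intro ctc_eq.cong_oplus ctc_eq.refl)
  also have "ctc_eq D \<dots> (canon_of (absorb (absorb S s) u))"
    using "1.IH"(2) .
  finally show ?case by simp
next
  case (2 p0 es xs x)
  show ?case by (simp add: canon_of_def canon_def ctc_eq.refl)
next
  case (3 p0 es xs)
  show ?case by (simp add: canon_of_def ctc_eq.T3)
qed (simp_all add: canon_of_def ctc_canon_Oplus_Delta ctc_canon_Oplus_Entry ctc_canon_Oplus_Gamma)

theorem lemma1:
  fixes D :: "'d dstruct" and t :: "('a, 'v, 'x) tterm"
  assumes "nontrivial_cancellation_meadow D"
  shows "\<exists>p0 es xs. distinct (map fst es) \<and> ctc_eq D t (canon p0 es xs)"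
proof -
  obtain p0 es xs where absorbed: "absorb (DZero, [], []) t = (p0, es, xs)"
    by (cases "absorb (DZero, [], []) t") auto
  have distinct: "distinct (map fst es)"
    using distinct_absorb[of "(DZero, [], [])" t] absorbed by simp
  have "ctc_eq D t (Oplus Eps t)"
    by (rule ctc_eq.trans[OF ctc_eq.sym[OF ctc_eq.T3] ctc_eq.T1])
  also have "ctc_eq D \<dots> (Oplus (canon_of (DZero, [], [])) t)"
    by (simp add: canon_of_def canon_def ctc_eq.cong_oplus ctc_eq.refl ctc_eq.sym ctc_eq.T7)
  also have "ctc_eq D \<dots> (canon p0 es xs)"
    using ctc_canon_of_Oplus_absorb[of D "(DZero, [], [])" t] absorbed by (simp add: canon_of_def)
  finally show ?thesis using distinct by blast
qed

end
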